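(* Let $n\ge 1$, let $x_0,\dots,x_n$ be pairwise distinct points of $[-1,1]$, let $\omega\in\mathbb{R}\setminus\{0\}$ and let $f_0,\dots,f_n\in\mathbb{C}$. Then the $(n+1)\times(n+1)$ matrix $T(B+i\omega E)$ is nonsingular. Consequently the collocation system $T(B+i\omega E)c=f$, equivalently $$\sum_{k=0}^n c_k T_k'(x_j)+i\omega\sum_{k=0}^n c_kT_k(x_j)=f_j,\qquad j=0,\dots,n,$$ has a unique solution $c=(c_0,\dots,c_n)^{\mathsf T}\in\mathbb{C}^{n+1}$; that is, there is exactly one polynomial $p(x)=\sum_{k=0}^n c_kT_k(x)$ of degree at most $n$ with $p'(x_j)+i\omega p(x_j)=f_j$ for all $j$.
   Context: $T_k$ denotes the Chebyshev polynomial of the first kind of degree $k$. $T$ is the $(n+1)\times(n+1)$ matrix with rows indexed by nodes and columns by degree: $T_{jk}=T_k(x_j)$, $j,k=0,\dots,n$. $B$ is the Chebyshev spectral differentiation matrix: $B_{ik}=2k/r_i$ if $k>i$ and $i+k$ is odd, and $B_{ik}=0$ otherwise ($0\le i,k\le n$), where $r_0=2$ and $r_i=1$ for $i\ge1$; it satisfies $\frac{d}{dx}\sum_k c_kT_k=\sum_i (Bc)_iT_i$. $E$ is the identity matrix. *)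

theory Defs
  imports "HOL-Analysis.Analysis" "Jordan_Normal_Form.Matrix" "Jordan_Normal_Form.Determinant"
begin

fun cheb :: "nat \<Rightarrow> real \<Rightarrow> real" where
  "cheb 0 x = 1"
| "cheb (Suc 0) x = x"
| "cheb (Suc (Suc k)) x = 2 * x * cheb (Suc k) x - cheb k x"

definition cheb_T :: "nat \<Rightarrow> (nat \<Rightarrow> real) \<Rightarrow> complex mat" where
  "cheb_T n x = mat (Suc n) (Suc n) (\<lambda>(j, k). complex_of_real (cheb k (x j)))"

definition cheb_r :: "nat \<Rightarrow> real" where
  "cheb_r i = (if i = 0 then 2 else 1)"

definition cheb_B :: "nat \<Rightarrow> complex mat" where
  "cheb_B n = mat (Suc n) (Suc n)
     (\<lambda>(i, k). if k > i \<and> odd (i + k) then complex_of_real (2 * real k / cheb_r i) else 0)"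

end

theory Submission
  imports Defs "HOL-Computational_Algebra.Polynomial"
begin

(* Write p = sum_k c_k T_k. Since T_k has degree exactly k, p determines c, and deg p <= n.
   The matrix T maps c to the values p(x_j); if they all vanish, p has n+1 distinct roots,
   so p = 0 and c = 0, hence det T ~= 0. The matrix B + i w E is upper triangular with
   diagonal i w, so its determinant (i w)^(n+1) is nonzero as well. For the collocation
   conditions themselves, p' + i w p has degree <= n and vanishes at the n+1 nodes, so it is
   the zero polynomial; comparing coefficients of degree deg p then forces p = 0. *)

lemma poly_map_poly_of_real:
  "poly (map_poly of_real p) (of_real t) = (of_real (poly p t) :: 'a :: real_field)"
  by (induction p) (auto simp: map_poly_pCons)

lemma pderiv_map_poly_of_real:
  "pderiv (map_poly (of_real :: real \<Rightarrow> 'a :: real_field) p) = map_poly of_real (pderiv p)"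
  by (rule poly_eqI) (simp add: coeff_pderiv coeff_map_poly)

lemma sum_smult_eq_0_imp_coeffs_eq_0:
  fixes p :: "nat \<Rightarrow> 'a :: idom poly"
  assumes deg: "\<And>k. degree (p k) \<le> k" and lead: "\<And>k. coeff (p k) k \<noteq> 0"
    and sum: "(\<Sum>k\<le>m. Polynomial.smult (d k) (p k)) = 0"
  shows "\<forall>k\<le>m. d k = 0"
  using sum
proof (induction m)
  case 0
  then show ?case using lead[of 0] by auto
next
  case (Suc m)
  have "degree (\<Sum>k\<le>m. Polynomial.smult (d k) (p k)) \<le> m"
    by (intro degree_sum_le) (auto intro: le_trans[OF degree_smult_le] le_trans[OF deg])
  then have "coeff (\<Sum>k\<le>m. Polynomial.smult (d k) (p k)) (Suc m) = 0"
    by (intro coeff_eq_0) auto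
  with Suc.prems have "d (Suc m) * coeff (p (Suc m)) (Suc m) = 0"
    by (metis (no_types) add_0 coeff_add coeff_smult coeff_0 sum.atMost_Suc)
  then have "d (Suc m) = 0" using lead by simp
  with Suc show ?case by (auto simp: le_Suc_eq)
qed

lemma pderiv_add_smult_eq_0_imp_eq_0:
  fixes p :: "'a :: idom poly"
  assumes "pderiv p + Polynomial.smult a p = 0" and "a \<noteq> 0"
  shows "p = 0"
proof -
  have "coeff (pderiv p) (degree p) = 0"
    by (simp add: coeff_pderiv coeff_eq_0)
  then have "a * lead_coeff p = coeff (pderiv p + Polynomial.smult a p) (degree p)" by simp
  with assms show ?thesis by simp
qed

lemma invertible_mat_if_det_neq_0:
  fixes A :: "'a :: field mat"
  assumes A: "A \<in> carrier_mat m m" and "det A \<noteq> 0"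
  shows "invertible_mat A"
  using det_non_zero_imp_unit[OF assms, of undefined] A
  unfolding Units_def ring_mat_def invertible_mat_def inverts_mat_def by auto

lemma ex1_mult_mat_vec_eq_if_det_neq_0:
  fixes A :: "'a :: field mat"
  assumes A: "A \<in> carrier_mat m m" and "det A \<noteq> 0" and f: "f \<in> carrier_vec m"
  shows "\<exists>!c. c \<in> carrier_vec m \<and> A *\<^sub>v c = f"
proof -
  obtain B where B: "B \<in> carrier_mat m m" "A * B = 1\<^sub>m m" "B * A = 1\<^sub>m m"
    using det_non_zero_imp_unit[OF assms(1,2), of undefined]
    unfolding Units_def ring_mat_def by auto
  show ?thesis
  proof (rule ex1I[of _ "B *\<^sub>v f"])
    show "B *\<^sub>v f \<in> carrier_vec m \<and> A *\<^sub>v (B *\<^sub>v f) = f"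
      using B f by (simp flip: assoc_mult_mat_vec[OF A B(1) f])
  next
    fix c assume c: "c \<in> carrier_vec m \<and> A *\<^sub>v c = f"
    then have "c = (B * A) *\<^sub>v c" using B by simp
    also have "\<dots> = B *\<^sub>v f" using c by (simp add: assoc_mult_mat_vec[OF B(1) A])
    finally show "c = B *\<^sub>v f" .
  qed
qed

lemma det_neq_0_if_poly_evaluation:
  fixes A :: "'a :: idom mat" and P :: "'a vec \<Rightarrow> 'a poly"
  assumes A: "A \<in> carrier_mat (Suc n) (Suc n)" and inj: "inj_on z {0..n}"
    and eval: "\<And>c j. c \<in> carrier_vec (Suc n) \<Longrightarrow> j \<le> n \<Longrightarrow> (A *\<^sub>v c) $ j = poly (P c) (z j)"
    and deg: "\<And>c. c \<in> carrier_vec (Suc n) \<Longrightarrow> degree (P c) \<le> n"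
    and faithful: "\<And>c. c \<in> carrier_vec (Suc n) \<Longrightarrow> P c = 0 \<Longrightarrow> c = 0\<^sub>v (Suc n)"
  shows "det A \<noteq> 0"
proof -
  have "c = 0\<^sub>v (Suc n)" if c: "c \<in> carrier_vec (Suc n)" and Ac: "A *\<^sub>v c = 0\<^sub>v (Suc n)" for c
  proof -
    have "poly (P c) (z j) = poly 0 (z j)" if "j \<in> {0..n}" for j
      using that eval[OF c, of j] Ac by simp
    moreover have "card (z ` {0..n}) = Suc n"
      using inj by (simp add: card_image)
    ultimately have "P c = 0"
      using deg[OF c] by (intro poly_eqI_degree[where A = "z ` {0..n}"]) auto
    then show ?thesis using faithful[OF c] by simp
  qed
  then show ?thesis using det_0_iff_vec_prod_zero[OF A] by blast
qed

fun cheb_poly :: "nat \<Rightarrow> real poly" where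
  "cheb_poly 0 = 1"
| "cheb_poly (Suc 0) = [:0, 1:]"
| "cheb_poly (Suc (Suc k)) = Polynomial.smult 2 (pCons 0 (cheb_poly (Suc k))) - cheb_poly k"

lemma poly_cheb_poly: "poly (cheb_poly k) t = cheb k t"
  by (induction k rule: cheb_poly.induct) (auto simp: algebra_simps)

lemma deriv_cheb: "deriv (cheb k) t = poly (pderiv (cheb_poly k)) t"
  by (metis DERIV_imp_deriv poly_DERIV poly_cheb_poly ext)

lemma degree_le_coeff_cheb_poly:
  "degree (cheb_poly k) \<le> k \<and> coeff (cheb_poly k) k = (if k = 0 then 1 else 2 ^ (k - 1))"
proof (induction k rule: cheb_poly.induct)
  case (3 k)
  have "degree (Polynomial.smult 2 (pCons 0 (cheb_poly (Suc k)))) \<le> Suc (Suc k)"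
    using 3 by (intro le_trans[OF degree_smult_le]) auto
  then have "degree (cheb_poly (Suc (Suc k))) \<le> Suc (Suc k)"
    using 3 by (auto intro!: degree_diff_le)
  moreover have "coeff (cheb_poly k) (Suc (Suc k)) = 0"
    using 3 by (intro coeff_eq_0) auto
  ultimately show ?case using 3 by auto
qed auto

lemma degree_cheb_poly: "degree (cheb_poly k) = k"
  using degree_le_coeff_cheb_poly[of k]
  by (metis le_degree le_antisym power_not_zero zero_neq_numeral one_neq_zero)

lemma coeff_cheb_poly_neq_0: "coeff (cheb_poly k) k \<noteq> 0"
  using degree_le_coeff_cheb_poly[of k] by simp

definition cheb_series :: "nat \<Rightarrow> complex vec \<Rightarrow> complex poly" where
  "cheb_series n c = (\<Sum>k\<le>n. Polynomial.smult (c $ k) (map_poly of_real (cheb_poly k)))"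

lemma poly_cheb_series:
  "poly (cheb_series n c) (of_real t) = (\<Sum>k\<le>n. c $ k * of_real (cheb k t))"
  by (simp add: cheb_series_def poly_sum poly_map_poly_of_real poly_cheb_poly)

lemma poly_pderiv_cheb_series:
  "poly (pderiv (cheb_series n c)) (of_real t) = (\<Sum>k\<le>n. c $ k * of_real (deriv (cheb k) t))"
  by (simp add: cheb_series_def higher_pderiv_sum[of 1, simplified] pderiv_smult poly_sum
      pderiv_map_poly_of_real poly_map_poly_of_real deriv_cheb)

lemma degree_cheb_series: "degree (cheb_series n c) \<le> n"
  unfolding cheb_series_def
  by (intro degree_sum_le)
    (auto intro: le_trans[OF degree_smult_le] simp: degree_map_poly degree_cheb_poly)

lemma cheb_series_eq_0_imp_eq_0:
  assumes "c \<in> carrier_vec (Suc n)" and "cheb_series n c = 0"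
  shows "c = 0\<^sub>v (Suc n)"
proof -
  have "\<forall>k\<le>n. c $ k = 0"
    using assms(2) unfolding cheb_series_def
    by (rule sum_smult_eq_0_imp_coeffs_eq_0[rotated 2])
      (simp_all add: degree_map_poly degree_cheb_poly coeff_map_poly coeff_cheb_poly_neq_0)
  with assms(1) show ?thesis by (intro eq_vecI) auto
qed

lemma cheb_T_mult_vec:
  assumes "c \<in> carrier_vec (Suc n)" and "j \<le> n"
  shows "(cheb_T n x *\<^sub>v c) $ j = poly (cheb_series n c) (of_real (x j))"
  using assms by (simp add: cheb_T_def mult_mat_vec_def scalar_prod_def poly_cheb_series
      atLeast0LessThan lessThan_Suc_atMost mult.commute)

lemma det_cheb_T_neq_0:
  assumes "inj_on x {0..n}"
  shows "det (cheb_T n x) \<noteq> 0"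
proof (rule det_neq_0_if_poly_evaluation[where P = "cheb_series n"])
  show "cheb_T n x \<in> carrier_mat (Suc n) (Suc n)"
    by (simp add: cheb_T_def)
  show "inj_on (\<lambda>j. complex_of_real (x j)) {0..n}"
    using assms by (auto simp: inj_on_def)
qed (simp_all add: cheb_T_mult_vec degree_cheb_series cheb_series_eq_0_imp_eq_0)

definition cheb_colloc :: "nat \<Rightarrow> (nat \<Rightarrow> real) \<Rightarrow> complex \<Rightarrow> complex mat" where
  "cheb_colloc n x a = mat (Suc n) (Suc n)
     (\<lambda>(j, k). complex_of_real (deriv (cheb k) (x j)) + a * complex_of_real (cheb k (x j)))"

lemma cheb_colloc_mult_vec:
  assumes "c \<in> carrier_vec (Suc n)" and "j \<le> n"
  shows "(cheb_colloc n x a *\<^sub>v c) $ j = (\<Sum>k\<le>n. c $ k * complex_of_real (deriv (cheb k) (x j)))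
           + a * (\<Sum>k\<le>n. c $ k * complex_of_real (cheb k (x j)))"
  using assms by (simp add: cheb_colloc_def mult_mat_vec_def scalar_prod_def atLeast0LessThan
      lessThan_Suc_atMost algebra_simps sum.distrib sum_distrib_left)

lemma cheb_colloc_mult_vec_eq_iff:
  assumes "c \<in> carrier_vec (Suc n)" and "f \<in> carrier_vec (Suc n)"
  shows "cheb_colloc n x a *\<^sub>v c = f \<longleftrightarrow>
    (\<forall>j\<le>n. (\<Sum>k\<le>n. c $ k * complex_of_real (deriv (cheb k) (x j)))
            + a * (\<Sum>k\<le>n. c $ k * complex_of_real (cheb k (x j))) = f $ j)"
  using assms cheb_colloc_mult_vec[OF assms(1)]
  by (auto simp: vec_eq_iff cheb_colloc_def less_Suc_eq_le)

lemma det_cheb_colloc_neq_0: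
  assumes "inj_on x {0..n}" and "a \<noteq> 0"
  shows "det (cheb_colloc n x a) \<noteq> 0"
proof (rule det_neq_0_if_poly_evaluation)
  show "inj_on (\<lambda>j. complex_of_real (x j)) {0..n}"
    using assms by (auto simp: inj_on_def)
  fix c :: "complex vec" assume c: "c \<in> carrier_vec (Suc n)"
  let ?p = "cheb_series n c"
  show "(cheb_colloc n x a *\<^sub>v c) $ j = poly (pderiv ?p + Polynomial.smult a ?p) (of_real (x j))"
    if "j \<le> n" for j
    using cheb_colloc_mult_vec[OF c that] by (simp add: poly_cheb_series poly_pderiv_cheb_series)
  show "degree (pderiv ?p + Polynomial.smult a ?p) \<le> n"
    using degree_cheb_series[of n c]
    by (intro degree_add_le le_trans[OF degree_smult_le]) (auto simp: degree_pderiv)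
  show "c = 0\<^sub>v (Suc n)" if "pderiv ?p + Polynomial.smult a ?p = 0"
    using that assms(2) c by (blast intro: cheb_series_eq_0_imp_eq_0 pderiv_add_smult_eq_0_imp_eq_0)
qed (simp add: cheb_colloc_def)

lemma det_cheb_B_add_diag: "det (cheb_B n + a \<cdot>\<^sub>m 1\<^sub>m (Suc n)) = a ^ Suc n"
proof -
  let ?D = "cheb_B n + a \<cdot>\<^sub>m 1\<^sub>m (Suc n)"
  have D: "?D \<in> carrier_mat (Suc n) (Suc n)" by (simp add: cheb_B_def)
  have "upper_triangular ?D"
    unfolding upper_triangular_def using D by (auto simp: cheb_B_def)
  moreover have "diag_mat ?D = replicate (Suc n) a"
    unfolding diag_mat_def using D
    by (intro nth_equalityI) (auto simp: cheb_B_def simp del: upt_Suc replicate_Suc)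
  ultimately show ?thesis using det_upper_triangular[OF _ D] by simp
qed

theorem mainTheorem1:
  fixes n :: nat and x :: "nat \<Rightarrow> real" and \<omega> :: real and f :: "complex vec"
  assumes "n \<ge> 1"
    and "inj_on x {0..n}"
    and "\<forall>j\<le>n. x j \<in> {-1..1}"
    and "\<omega> \<noteq> 0"
    and "f \<in> carrier_vec (Suc n)"
  shows "invertible_mat (cheb_T n x * (cheb_B n + (\<i> * complex_of_real \<omega>) \<cdot>\<^sub>m 1\<^sub>m (Suc n)))
    \<and> (\<exists>!c. c \<in> carrier_vec (Suc n) \<and>
           (cheb_T n x * (cheb_B n + (\<i> * complex_of_real \<omega>) \<cdot>\<^sub>m 1\<^sub>m (Suc n))) *\<^sub>v c = f)
    \<and> (\<exists>!c. c \<in> carrier_vec (Suc n) \<and>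
           (\<forall>j\<le>n. (\<Sum>k\<le>n. c $ k * complex_of_real (deriv (cheb k) (x j)))
                   + \<i> * complex_of_real \<omega> * (\<Sum>k\<le>n. c $ k * complex_of_real (cheb k (x j))) = f $ j))"
proof -
  let ?a = "\<i> * complex_of_real \<omega>"
  let ?T = "cheb_T n x" and ?D = "cheb_B n + ?a \<cdot>\<^sub>m 1\<^sub>m (Suc n)"
  have T: "?T \<in> carrier_mat (Suc n) (Suc n)" and D: "?D \<in> carrier_mat (Suc n) (Suc n)"
    by (simp_all add: cheb_T_def cheb_B_def)
  have TD: "?T * ?D \<in> carrier_mat (Suc n) (Suc n)"
    using T D by simp
  have a: "?a \<noteq> 0"
    using assms(4) by simp
  have det_TD: "det (?T * ?D) \<noteq> 0"
    using det_cheb_T_neq_0[OF assms(2)] a by (simp add: det_mult[OF T D] det_cheb_B_add_diag)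
  have "\<exists>!c. c \<in> carrier_vec (Suc n) \<and> cheb_colloc n x ?a *\<^sub>v c = f"
    using det_cheb_colloc_neq_0[OF assms(2) a] assms(5)
    by (intro ex1_mult_mat_vec_eq_if_det_neq_0) (simp_all add: cheb_colloc_def)
  then show ?thesis
    using invertible_mat_if_det_neq_0[OF TD det_TD] ex1_mult_mat_vec_eq_if_det_neq_0[OF TD det_TD assms(5)]
    by (simp add: cheb_colloc_mult_vec_eq_iff[OF _ assms(5)] cong: conj_cong)
qed

end
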